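(* Let $\mathcal{F}$ be a finite family of closed intervals on a line and let $G$ be its intersection graph. Then $\chi_{CF}^{cn}(G)\le 3$.
   Context: The intersection graph of $\mathcal{F}$ has vertex set $\mathcal{F}$, with distinct $s_1,s_2$ adjacent iff $s_1\cap s_2\neq\emptyset$. $\chi_{CF}^{cn}(G)$ is the minimum number of colors in a coloring of $V(G)$ such that for every vertex $v$, the closed neighborhood $N_G[v]=\{v\}\cup\{u:\{u,v\}\in E(G)\}$ contains a vertex whose color differs from the colors of all other vertices of $N_G[v]$. *)

theory Defs
  imports Complex_Main
begin

definition closed_interval :: "real set \<Rightarrow> bool" where
  "closed_interval s \<longleftrightarrow> (\<exists>a b. a \<le> b \<and> s = {a..b})"

text \<open>Graphs are given by a vertex set V and a symmetric irreflexive adjacency E.\<close>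
definition closed_nbhd :: "'a set \<Rightarrow> ('a \<Rightarrow> 'a \<Rightarrow> bool) \<Rightarrow> 'a \<Rightarrow> 'a set" where
  "closed_nbhd V E v = insert v {u \<in> V. E u v}"

definition cf_cn_coloring :: "'a set \<Rightarrow> ('a \<Rightarrow> 'a \<Rightarrow> bool) \<Rightarrow> ('a \<Rightarrow> nat) \<Rightarrow> nat \<Rightarrow> bool" where
  "cf_cn_coloring V E c k \<longleftrightarrow> (\<forall>v\<in>V. c v < k) \<and>
     (\<forall>v\<in>V. \<exists>u\<in>closed_nbhd V E v. \<forall>w\<in>closed_nbhd V E v. w \<noteq> u \<longrightarrow> c w \<noteq> c u)"

definition chi_cf_cn :: "'a set \<Rightarrow> ('a \<Rightarrow> 'a \<Rightarrow> bool) \<Rightarrow> nat" where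
  "chi_cf_cn V E = (LEAST k. \<exists>c. cf_cn_coloring V E c k)"

text \<open>Adjacency of the intersection graph of a family of sets (vertex set = the family).\<close>
definition inter_adj :: "'b set \<Rightarrow> 'b set \<Rightarrow> bool" where
  "inter_adj s1 s2 \<longleftrightarrow> s1 \<noteq> s2 \<and> s1 \<inter> s2 \<noteq> {}"

end

theory Submission
  imports Defs
begin

text \<open>Scan the intervals from the left. Among the intervals containing the smallest right
  endpoint (a clique), take one, \<open>J\<close>, reaching furthest to the right; every interval ending
  no later than \<open>J\<close> meets \<open>J\<close>. Colour the intervals ending after \<open>J\<close> recursively, give \<open>J\<close> the
  nonzero colour not used by the anchor of the recursive colouring (the unique nonzero-coloured
  member of its first clique), and colour \<open>0\<close> all other intervals of the first clique. An
  interval ending no later than \<open>J\<close> can meet, among the recursively coloured ones, only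
  members of their first clique, so the colour of \<open>J\<close> is unique in its neighbourhood.\<close>

text \<open>Intervals are given abstractly by endpoint functions \<open>l\<close> and \<open>r\<close> on an index set, so that
  equal intervals with different indices are allowed in the induction.\<close>

definition meets :: "('a \<Rightarrow> real) \<Rightarrow> ('a \<Rightarrow> real) \<Rightarrow> 'a \<Rightarrow> 'a \<Rightarrow> bool" where
  "meets l r u v \<longleftrightarrow> l u \<le> r v \<and> l v \<le> r u"

definition nbhd :: "('a \<Rightarrow> real) \<Rightarrow> ('a \<Rightarrow> real) \<Rightarrow> 'a set \<Rightarrow> 'a \<Rightarrow> 'a set" where
  "nbhd l r F v = {w \<in> F. meets l r w v}"

definition first_clique :: "('a \<Rightarrow> real) \<Rightarrow> ('a \<Rightarrow> real) \<Rightarrow> 'a set \<Rightarrow> 'a set" where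
  "first_clique l r F = {s \<in> F. l s \<le> Min (r ` F)}"

definition unique_colour :: "('a \<Rightarrow> nat) \<Rightarrow> 'a set \<Rightarrow> 'a \<Rightarrow> bool" where
  "unique_colour c N u \<longleftrightarrow> u \<in> N \<and> c u \<noteq> 0 \<and> (\<forall>w\<in>N. w \<noteq> u \<longrightarrow> c w \<noteq> c u)"

definition cf_3_colouring :: "('a \<Rightarrow> real) \<Rightarrow> ('a \<Rightarrow> real) \<Rightarrow> 'a set \<Rightarrow> ('a \<Rightarrow> nat) \<Rightarrow> bool" where
  "cf_3_colouring l r F c \<longleftrightarrow>
     (\<forall>v\<in>F. c v < 3) \<and> (\<forall>v\<in>F. \<exists>u. unique_colour c (nbhd l r F v) u)"

definition anchored :: "('a \<Rightarrow> real) \<Rightarrow> ('a \<Rightarrow> real) \<Rightarrow> 'a set \<Rightarrow> ('a \<Rightarrow> nat) \<Rightarrow> 'a \<Rightarrow> bool" where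
  "anchored l r F c J \<longleftrightarrow> J \<in> first_clique l r F \<and>
     (\<forall>w\<in>first_clique l r F. w \<noteq> J \<longrightarrow> c w = 0) \<and>
     (\<forall>v\<in>first_clique l r F. unique_colour c (nbhd l r F v) J)"

lemma unique_colour_extend:
  assumes "unique_colour c' N' u" and "N' \<subseteq> N" and "\<forall>w\<in>N'. c w = c' w"
    and "\<forall>w\<in>N - N'. c w \<noteq> c u"
  shows "unique_colour c N u"
  using assms unfolding unique_colour_def by (metis Diff_iff subsetD)

lemma nbhd_subfamily: "F' \<subseteq> F \<Longrightarrow> nbhd l r F' v = nbhd l r F v \<inter> F'"
  unfolding nbhd_def by blast

lemma meets_if_ends_before:
  assumes "finite F" "v \<in> F" "l v \<le> r v" "l J \<le> Min (r ` F)" "r v \<le> r J"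
  shows "meets l r J v"
proof -
  have "Min (r ` F) \<le> r v" using assms(1,2) by simp
  then show ?thesis using assms(3-5) unfolding meets_def by linarith
qed

lemma first_clique_furthest_exists:
  assumes "finite F" "F \<noteq> {}" "\<forall>s\<in>F. l s \<le> r s"
  shows "\<exists>J\<in>first_clique l r F. \<forall>s\<in>first_clique l r F. r s \<le> r J"
proof -
  let ?X = "first_clique l r F"
  have "Min (r ` F) \<in> r ` F" using assms(1,2) by simp
  then obtain s where "s \<in> F" "r s = Min (r ` F)" by auto
  then have "s \<in> ?X" using assms(3) unfolding first_clique_def by auto
  moreover have "finite ?X" using assms(1) unfolding first_clique_def by simp
  ultimately have "Max (r ` ?X) \<in> r ` ?X" by (blast intro: Max_in finite_imageI)
  moreover have "\<forall>s\<in>?X. r s \<le> Max (r ` ?X)" using \<open>finite ?X\<close> by simp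
  ultimately show ?thesis by force
qed

lemma cf_3_colouring_single_dominator:
  assumes "finite F" "\<forall>s\<in>F. l s \<le> r s" "J \<in> first_clique l r F" "\<forall>v\<in>F. r v \<le> r J"
  defines "c \<equiv> \<lambda>s. if s = J then 1 else 0"
  shows "cf_3_colouring l r F c \<and> anchored l r F c J"
proof -
  have "unique_colour c (nbhd l r F v) J" if "v \<in> F" for v
    using that assms meets_if_ends_before[of F v l r J]
    unfolding unique_colour_def nbhd_def first_clique_def c_def by auto
  then show ?thesis
    using assms(3) unfolding cf_3_colouring_def anchored_def first_clique_def c_def by auto
qed

lemma cf_3_colouring_extend:
  assumes fin: "finite F" and lr: "\<forall>s\<in>F. l s \<le> r s"
    and J: "J \<in> first_clique l r F" and furthest: "\<forall>s\<in>first_clique l r F. r s \<le> r J"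
    and F2: "F2 = {s \<in> F. r J < r s}"
    and c2: "cf_3_colouring l r F2 c2" and J2: "anchored l r F2 c2 J2"
  defines "c \<equiv> \<lambda>s. if s = J then 3 - c2 J2 else if s \<in> F2 then c2 s else 0"
  shows "cf_3_colouring l r F c \<and> anchored l r F c J"
proof -
  have JF: "J \<in> F" and lJ: "l J \<le> Min (r ` F)" and "J \<notin> F2"
    using J F2 unfolding first_clique_def by auto
  have "F2 \<subseteq> F" using F2 by blast
  have c_F2: "\<forall>s\<in>F2. c s = c2 s" using \<open>J \<notin> F2\<close> by (simp add: c_def)
  have J2F2: "J2 \<in> F2" and J2_first: "J2 \<in> first_clique l r F2"
    using J2 unfolding anchored_def first_clique_def by auto
  have "c2 J2 \<noteq> 0"
    using J2 J2_first unfolding anchored_def unique_colour_def by blast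
  moreover have "c2 J2 < 3" using c2 J2F2 unfolding cf_3_colouring_def by blast
  ultimately have b: "c2 J2 = 1 \<or> c2 J2 = 2" by linarith
  have cJ: "c J \<noteq> c2 J2" "c J \<noteq> 0" using b by (auto simp: c_def)
  have colours: "\<forall>v\<in>F. c v < 3"
    using c2 b unfolding cf_3_colouring_def c_def by auto
  have J_before_F2: "r J < Min (r ` F2)"
    using J2F2 fin F2 by (subst Min_gr_iff) auto
  have dominated: "unique_colour c (nbhd l r F v) J" if v: "v \<in> F" "r v \<le> r J" for v
  proof -
    have "c w \<noteq> c J" if "w \<in> nbhd l r F v" "w \<noteq> J" for w
    proof (cases "w \<in> F2")
      case True
      have "l w \<le> r v" using that unfolding nbhd_def meets_def by auto
      then have "w \<in> first_clique l r F2"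
        using True v(2) J_before_F2 unfolding first_clique_def by auto
      then have "w = J2 \<or> c2 w = 0" using J2 unfolding anchored_def by auto
      then show ?thesis using True c_F2 cJ by auto
    next
      case False
      then show ?thesis using that cJ by (simp add: c_def)
    qed
    moreover have "J \<in> nbhd l r F v"
      using meets_if_ends_before[of F v l r J] fin v lr lJ JF by (simp add: nbhd_def)
    ultimately show ?thesis using cJ(2) unfolding unique_colour_def by simp
  qed
  have from_F2: "\<exists>u. unique_colour c (nbhd l r F v) u" if v: "v \<in> F2" for v
  proof (cases "l v \<le> r J")
    case True
    then have "v \<in> first_clique l r F2" using v J_before_F2 unfolding first_clique_def by auto
    then have "unique_colour c2 (nbhd l r F2 v) J2" using J2 unfolding anchored_def by blast
    moreover have "\<forall>w\<in>F - F2. c w \<noteq> c2 J2" using cJ b by (auto simp: c_def)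
    ultimately have "unique_colour c (nbhd l r F v) J2"
      using unique_colour_extend[of c2 "nbhd l r F2 v" J2 "nbhd l r F v" c]
        nbhd_subfamily[OF \<open>F2 \<subseteq> F\<close>] c_F2 J2F2 unfolding nbhd_def by auto
    then show ?thesis ..
  next
    case False
    then have "J \<notin> nbhd l r F v" unfolding nbhd_def meets_def by auto
    obtain u where u: "unique_colour c2 (nbhd l r F2 v) u"
      using c2 v unfolding cf_3_colouring_def by blast
    then have "u \<in> F2" "c u \<noteq> 0"
      using c_F2 unfolding unique_colour_def nbhd_def by auto
    then have "\<forall>w\<in>nbhd l r F v - F2. c w \<noteq> c u"
      using \<open>J \<notin> nbhd l r F v\<close> by (auto simp: c_def)
    then have "unique_colour c (nbhd l r F v) u"
      using unique_colour_extend[OF u] nbhd_subfamily[OF \<open>F2 \<subseteq> F\<close>] c_F2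
      unfolding nbhd_def by auto
    then show ?thesis ..
  qed
  have first_ends_before: "r v \<le> r J" if "v \<in> first_clique l r F" for v
    using furthest that by blast
  have "\<exists>u. unique_colour c (nbhd l r F v) u" if "v \<in> F" for v
  proof (cases "v \<in> F2")
    case False
    then have "r v \<le> r J" using that F2 by auto
    then show ?thesis using dominated that by blast
  qed (rule from_F2)
  moreover have "\<forall>w\<in>first_clique l r F. w \<noteq> J \<longrightarrow> c w = 0"
    using first_ends_before F2 by (force simp: c_def)
  moreover have "\<forall>v\<in>first_clique l r F. unique_colour c (nbhd l r F v) J"
    using dominated first_ends_before unfolding first_clique_def by blast
  ultimately show ?thesis
    using colours J unfolding cf_3_colouring_def anchored_def by blast
qed

theorem cf_3_colouring_exists:
  assumes "finite F" "\<forall>s\<in>F. l s \<le> r s"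
  shows "\<exists>c. cf_3_colouring l r F c \<and> (F \<noteq> {} \<longrightarrow> (\<exists>J. anchored l r F c J))"
  using assms
proof (induction "card F" arbitrary: F rule: less_induct)
  case less
  show ?case
  proof (cases "F = {}")
    case True
    then show ?thesis by (simp add: cf_3_colouring_def)
  next
    case False
    then obtain J where J: "J \<in> first_clique l r F"
      and furthest: "\<forall>s\<in>first_clique l r F. r s \<le> r J"
      using first_clique_furthest_exists less.prems by blast
    define F2 where "F2 = {s \<in> F. r J < r s}"
    have "J \<in> F" "J \<notin> F2" using J unfolding first_clique_def F2_def by auto
    then have "F2 \<subset> F" unfolding F2_def by blast
    then have "card F2 < card F" using less.prems(1) by (rule psubset_card_mono[rotated])
    then obtain c2 where c2: "cf_3_colouring l r F2 c2"
      and anchor2: "F2 \<noteq> {} \<longrightarrow> (\<exists>J2. anchored l r F2 c2 J2)"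
      using less.hyps[of F2] less.prems unfolding F2_def by auto
    show ?thesis
    proof (cases "F2 = {}")
      case True
      then have "\<forall>v\<in>F. r v \<le> r J" unfolding F2_def by auto
      then show ?thesis using cf_3_colouring_single_dominator[OF less.prems J] by blast
    next
      case False
      then show ?thesis
        using anchor2 cf_3_colouring_extend[OF less.prems J furthest F2_def c2] by blast
    qed
  qed
qed

lemma closed_interval_inter_iff_meets:
  assumes "closed_interval u" "closed_interval v"
  shows "u \<inter> v \<noteq> {} \<longleftrightarrow> meets Inf Sup u v"
proof -
  obtain a b c d where "u = {a..b}" "v = {c..d}" "a \<le> b" "c \<le> d"
    using assms unfolding closed_interval_def by blast
  then show ?thesis unfolding meets_def by auto
qed

lemma closed_nbhd_interval_graph:
  assumes "\<forall>s\<in>F. closed_interval s" "v \<in> F"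
  shows "closed_nbhd F inter_adj v = nbhd Inf Sup F v"
proof -
  have "meets Inf Sup v v"
    using assms unfolding closed_interval_def meets_def by auto
  have "w \<in> closed_nbhd F inter_adj v \<longleftrightarrow> w \<in> nbhd Inf Sup F v" for w
  proof (cases "w \<in> F")
    case True
    then show ?thesis
      using closed_interval_inter_iff_meets[of w v] assms \<open>meets Inf Sup v v\<close>
      unfolding closed_nbhd_def inter_adj_def nbhd_def by auto
  next
    case False
    then show ?thesis using assms(2) unfolding closed_nbhd_def nbhd_def by auto
  qed
  then show ?thesis by blast
qed

lemma cf_cn_coloring_interval_graph:
  assumes "\<forall>s\<in>F. closed_interval s" "cf_3_colouring Inf Sup F c"
  shows "cf_cn_coloring F inter_adj c 3"
  unfolding cf_cn_coloring_def
proof (intro conjI ballI)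
  fix v assume "v \<in> F"
  then show "c v < 3" using assms(2) unfolding cf_3_colouring_def by blast
next
  fix v assume v: "v \<in> F"
  then obtain u where "unique_colour c (nbhd Inf Sup F v) u"
    using assms(2) unfolding cf_3_colouring_def by blast
  then show "\<exists>u\<in>closed_nbhd F inter_adj v. \<forall>w\<in>closed_nbhd F inter_adj v. w \<noteq> u \<longrightarrow> c w \<noteq> c u"
    using closed_nbhd_interval_graph[OF assms(1) v] unfolding unique_colour_def by auto
qed

theorem lemmaA1:
  fixes F :: "real set set"
  assumes "finite F"
    and "\<forall>s\<in>F. closed_interval s"
  shows "chi_cf_cn F inter_adj \<le> 3"
proof -
  have "\<forall>s\<in>F. Inf s \<le> Sup s"
    using assms(2) unfolding closed_interval_def by auto
  then obtain c where c: "cf_3_colouring Inf Sup F c"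
    using cf_3_colouring_exists[OF assms(1)] by blast
  have "cf_cn_coloring F inter_adj c 3"
    using cf_cn_coloring_interval_graph[OF assms(2) c] .
  then show ?thesis
    unfolding chi_cf_cn_def by (blast intro: Least_le)
qed

end
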